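(* Consider the domain-incremental setting described in the context, with arbitrary TII, WTP and TAP predictors and an arbitrary measurable weight function $\gamma$. Let $\delta,\epsilon,\eta\ge0$. If $\mathbb{E}_{\boldsymbol{x}\sim\mu}[H^{\gamma}_{\rm WTP}(\boldsymbol{x})]\le\delta$, $\mathbb{E}_{\boldsymbol{x}\sim\mu}[H^{\gamma}_{\rm TII}(\boldsymbol{x})]\le\epsilon$ and $\mathbb{E}_{\boldsymbol{x}\sim\mu}[H_{\rm TAP}(\boldsymbol{x})]\le\eta$, then the loss error satisfies $\mathcal L\in[0,\max\{\delta+\epsilon+\log t,\ \eta\}]$.
   Context: Domain-incremental setting (DIL). Fix integers $t\ge1$ (tasks/domains) and $m\ge1$; every task has the same class set $[m]$. Let $\mu$ be a probability distribution on an input space; each input $\boldsymbol{x}$ has a ground-truth domain $\bar i(\boldsymbol{x})\in[t]$ and a ground-truth class $\bar j(\boldsymbol{x})\in[m]$. A model provides, measurably in $\boldsymbol{x}$: a TII probability distribution $\big(P(\boldsymbol{x}\in\mathcal X_i\mid\mathcal D,\theta)\big)_{i\in[t]}$ on $[t]$; for each $i\in[t]$ a WTP probability distribution $\big(P(\boldsymbol{x}\in\mathcal X_{i,j}\mid\boldsymbol{x}\in\mathcal X_i,\mathcal D,\theta)\big)_{j\in[m]}$ on $[m]$; the induced DIL prediction $P(\boldsymbol{x}\in\mathcal X_{*,j}\mid\mathcal D,\theta)=\sum_{i\in[t]}P(\boldsymbol{x}\in\mathcal X_{i,j}\mid\boldsymbol{x}\in\mathcal X_i,\mathcal D,\theta)\,P(\boldsymbol{x}\in\mathcal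 X_i\mid\mathcal D,\theta)$ for $j\in[m]$; and a TAP probability distribution $\big(P(\boldsymbol{x}\in\mathcal X^{c}\mid\mathcal D,\theta)\big)_{c\in[m]}$ on $[m]$ (produced separately). A weight function $\gamma$ assigns to each $\boldsymbol{x}$ a point $\gamma(\boldsymbol{x})=(\gamma_i)_{i\in[t]}$ of the probability simplex on $[t]$. With conventions $-\log0=+\infty$ and $0\cdot(+\infty)=0$, define $H^{\gamma}_{\rm WTP}(\boldsymbol{x})=-\sum_{i}\gamma_i\log P(\boldsymbol{x}\in\mathcal X_{i,\bar j}\mid\boldsymbol{x}\in\mathcal X_i,\mathcal D,\theta)$, $H^{\gamma}_{\rm TII}(\boldsymbol{x})=-\sum_i\gamma_i\log P(\boldsymbol{x}\in\mathcal X_i\mid\mathcal D,\theta)$, $H_{\rm TAP}(\boldsymbol{x})=-\log P(\boldsymbol{x}\in\mathcal X^{\bar j}\mid\mathcal D,\theta)$, where $\bar j=\bar j(\boldsymbol{x})$. The loss error is $\mathcal L=\max\{\mathbb{E}_{\boldsymbol{x}\sim\mu}[-\log P(\boldsymbol{x}\in\mathcal X_{*,\bar j}\mid\mathcal D,\theta)],\ \mathbb{E}_{\boldsymbol{x}\sim\mu}[H_{\rm TAP}(\boldsymbol{x})]\}$. *)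

theory Defs
  imports "HOL-Probability.Probability"
begin

text \<open>Negative natural logarithm with the convention -log 0 = +infinity,
  valued in the extended non-negative reals (0 * infinity = 0 holds there).\<close>
definition neglog :: "real \<Rightarrow> ennreal" where
  "neglog p = (if p \<le> 0 then \<infinity> else ennreal (- ln p))"

definition is_distr :: "nat \<Rightarrow> (nat \<Rightarrow> real) \<Rightarrow> bool" where
  "is_distr n p \<longleftrightarrow> (\<forall>k<n. 0 \<le> p k) \<and> (\<Sum>k<n. p k) = 1"

text \<open>Induced DIL prediction P(x in X_{*,j}).\<close>
definition dil_pred ::
  "nat \<Rightarrow> ('a \<Rightarrow> nat \<Rightarrow> real) \<Rightarrow> ('a \<Rightarrow> nat \<Rightarrow> nat \<Rightarrow> real) \<Rightarrow> 'a \<Rightarrow> nat \<Rightarrow> real" where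
  "dil_pred t tii wtp x j = (\<Sum>i<t. wtp x i j * tii x i)"

definition H_WTP ::
  "nat \<Rightarrow> ('a \<Rightarrow> nat \<Rightarrow> real) \<Rightarrow> ('a \<Rightarrow> nat \<Rightarrow> nat \<Rightarrow> real) \<Rightarrow> ('a \<Rightarrow> nat) \<Rightarrow> 'a \<Rightarrow> ennreal" where
  "H_WTP t \<gamma> wtp jbar x = (\<Sum>i<t. ennreal (\<gamma> x i) * neglog (wtp x i (jbar x)))"

definition H_TII ::
  "nat \<Rightarrow> ('a \<Rightarrow> nat \<Rightarrow> real) \<Rightarrow> ('a \<Rightarrow> nat \<Rightarrow> real) \<Rightarrow> 'a \<Rightarrow> ennreal" where
  "H_TII t \<gamma> tii x = (\<Sum>i<t. ennreal (\<gamma> x i) * neglog (tii x i))"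

definition H_TAP :: "('a \<Rightarrow> nat \<Rightarrow> real) \<Rightarrow> ('a \<Rightarrow> nat) \<Rightarrow> 'a \<Rightarrow> ennreal" where
  "H_TAP tap jbar x = neglog (tap x (jbar x))"

definition loss_error ::
  "'a measure \<Rightarrow> nat \<Rightarrow> ('a \<Rightarrow> nat \<Rightarrow> real) \<Rightarrow> ('a \<Rightarrow> nat \<Rightarrow> nat \<Rightarrow> real)
   \<Rightarrow> ('a \<Rightarrow> nat \<Rightarrow> real) \<Rightarrow> ('a \<Rightarrow> nat) \<Rightarrow> ennreal" where
  "loss_error M t tii wtp tap jbar =
     max (\<integral>\<^sup>+ x. neglog (dil_pred t tii wtp x (jbar x)) \<partial>M)
         (\<integral>\<^sup>+ x. H_TAP tap jbar x \<partial>M)"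

end

theory Submission
  imports Defs
begin

text \<open>For every domain i the mixture dil_pred dominates its own summand, so
  -log dil_pred \<le> -log WTP_i - log TII_i pointwise; averaging these t bounds with the
  weights \<gamma>_i and integrating bounds the DIL cross entropy by \<delta> + \<epsilon>, which is even
  sharper than the claimed \<delta> + \<epsilon> + log t.\<close>

lemma borel_measurable_neglog [measurable]: "neglog \<in> borel_measurable borel"
  unfolding neglog_def by measurable

lemma neglog_antimono:
  assumes "p \<le> q"
  shows "neglog q \<le> neglog p"
  using assms by (auto simp: neglog_def intro!: ennreal_leI)

lemma neglog_mult:
  assumes "0 \<le> p" "p \<le> 1" "0 \<le> q" "q \<le> 1"
  shows "neglog (p * q) = neglog p + neglog q"
proof (cases "p = 0 \<or> q = 0")
  case True
  then show ?thesis by (auto simp: neglog_def)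
next
  case False
  with assms have p: "0 < p" and q: "0 < q" by auto
  have "0 \<le> - ln p" "0 \<le> - ln q"
    using assms p q by simp_all
  moreover have "\<not> p * q \<le> 0"
    using p q by (simp add: not_le)
  ultimately show ?thesis
    using p q by (simp add: neglog_def ln_mult ennreal_plus[symmetric])
qed

lemma is_distr_nonneg: "is_distr n p \<Longrightarrow> k < n \<Longrightarrow> 0 \<le> p k"
  by (simp add: is_distr_def)

lemma is_distr_le_one:
  assumes "is_distr n p" "k < n"
  shows "p k \<le> 1"
proof -
  have "p k \<le> (\<Sum>l<n. p l)"
    using assms by (intro member_le_sum) (auto simp: is_distr_def)
  with assms(1) show ?thesis by (simp add: is_distr_def)
qed

lemma is_distr_sum_ennreal:
  assumes "is_distr n p"
  shows "(\<Sum>k<n. ennreal (p k)) = 1"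
  using assms by (subst sum_ennreal) (auto simp: is_distr_def)

lemma neglog_dil_pred_le_summand:
  assumes tii: "is_distr t (tii x)" and wtp: "\<And>i. i < t \<Longrightarrow> is_distr m (wtp x i)"
    and "i < t" "j < m"
  shows "neglog (dil_pred t tii wtp x j) \<le> neglog (wtp x i j) + neglog (tii x i)"
proof -
  have "0 \<le> wtp x k j * tii x k" if "k < t" for k
    using assms that by (intro mult_nonneg_nonneg is_distr_nonneg) auto
  then have "wtp x i j * tii x i \<le> dil_pred t tii wtp x j"
    unfolding dil_pred_def using assms(3) by (intro member_le_sum) auto
  then have "neglog (dil_pred t tii wtp x j) \<le> neglog (wtp x i j * tii x i)"
    by (rule neglog_antimono)
  also have "\<dots> = neglog (wtp x i j) + neglog (tii x i)"
    using assms by (intro neglog_mult is_distr_nonneg is_distr_le_one) auto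
  finally show ?thesis .
qed

lemma neglog_dil_pred_le_H:
  assumes "is_distr t (tii x)" "\<And>i. i < t \<Longrightarrow> is_distr m (wtp x i)"
    and \<gamma>: "is_distr t (\<gamma> x)" and "jbar x < m"
  shows "neglog (dil_pred t tii wtp x (jbar x)) \<le> H_WTP t \<gamma> wtp jbar x + H_TII t \<gamma> tii x"
proof -
  let ?L = "neglog (dil_pred t tii wtp x (jbar x))"
  have "?L = (\<Sum>i<t. ennreal (\<gamma> x i) * ?L)"
    by (simp add: sum_distrib_right[symmetric] is_distr_sum_ennreal[OF \<gamma>])
  also have "\<dots> \<le> (\<Sum>i<t. ennreal (\<gamma> x i) * (neglog (wtp x i (jbar x)) + neglog (tii x i)))"
    using assms by (intro sum_mono mult_left_mono neglog_dil_pred_le_summand) auto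
  also have "\<dots> = H_WTP t \<gamma> wtp jbar x + H_TII t \<gamma> tii x"
    unfolding H_WTP_def H_TII_def by (simp add: distrib_left sum.distrib)
  finally show ?thesis .
qed

lemma borel_measurable_H_WTP:
  assumes "jbar \<in> measurable M (count_space UNIV)"
    and "\<And>i j. (\<lambda>x. wtp x i j) \<in> borel_measurable M"
    and "\<And>i. (\<lambda>x. \<gamma> x i) \<in> borel_measurable M"
  shows "H_WTP t \<gamma> wtp jbar \<in> borel_measurable M"
proof -
  have "(\<lambda>x. wtp x i (jbar x)) \<in> borel_measurable M" for i
    by (rule measurable_compose_countable[where f = "\<lambda>j x. wtp x i j", OF assms(2,1)])
  then show ?thesis
    unfolding H_WTP_def using assms(3) by measurable
qed

lemma borel_measurable_H_TII:
  assumes "\<And>i. (\<lambda>x. tii x i) \<in> borel_measurable M"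
    and "\<And>i. (\<lambda>x. \<gamma> x i) \<in> borel_measurable M"
  shows "H_TII t \<gamma> tii \<in> borel_measurable M"
  unfolding H_TII_def using assms by measurable

theorem theorem4:
  fixes M :: "'a measure" and t m :: nat
    and ibar jbar :: "'a \<Rightarrow> nat"
    and tii :: "'a \<Rightarrow> nat \<Rightarrow> real"
    and wtp :: "'a \<Rightarrow> nat \<Rightarrow> nat \<Rightarrow> real"
    and tap :: "'a \<Rightarrow> nat \<Rightarrow> real"
    and \<gamma> :: "'a \<Rightarrow> nat \<Rightarrow> real"
    and \<delta> \<epsilon> \<eta> :: real
  assumes "prob_space M"
    and "t \<ge> 1" and "m \<ge> 1"
    and "ibar \<in> measurable M (count_space UNIV)" and "\<And>x. ibar x < t"
    and "jbar \<in> measurable M (count_space UNIV)" and "\<And>x. jbar x < m"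
    and "\<And>i. (\<lambda>x. tii x i) \<in> borel_measurable M"
    and "\<And>i j. (\<lambda>x. wtp x i j) \<in> borel_measurable M"
    and "\<And>c. (\<lambda>x. tap x c) \<in> borel_measurable M"
    and "\<And>i. (\<lambda>x. \<gamma> x i) \<in> borel_measurable M"
    and "\<And>x. is_distr t (tii x)"
    and "\<And>x i. i < t \<Longrightarrow> is_distr m (wtp x i)"
    and "\<And>x. is_distr m (tap x)"
    and "\<And>x. is_distr t (\<gamma> x)"
    and "\<delta> \<ge> 0" and "\<epsilon> \<ge> 0" and "\<eta> \<ge> 0"
    and "(\<integral>\<^sup>+ x. H_WTP t \<gamma> wtp jbar x \<partial>M) \<le> ennreal \<delta>"
    and "(\<integral>\<^sup>+ x. H_TII t \<gamma> tii x \<partial>M) \<le> ennreal \<epsilon>"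
    and "(\<integral>\<^sup>+ x. H_TAP tap jbar x \<partial>M) \<le> ennreal \<eta>"
  shows "0 \<le> loss_error M t tii wtp tap jbar \<and>
         loss_error M t tii wtp tap jbar \<le> ennreal (max (\<delta> + \<epsilon> + ln (real t)) \<eta>)"
proof -
  let ?B = "ennreal (max (\<delta> + \<epsilon> + ln (real t)) \<eta>)"
  have "(\<integral>\<^sup>+ x. neglog (dil_pred t tii wtp x (jbar x)) \<partial>M)
      \<le> (\<integral>\<^sup>+ x. H_WTP t \<gamma> wtp jbar x + H_TII t \<gamma> tii x \<partial>M)"
    using assms(7,12,13,15) by (intro nn_integral_mono neglog_dil_pred_le_H)
  also have "\<dots> = (\<integral>\<^sup>+ x. H_WTP t \<gamma> wtp jbar x \<partial>M) + (\<integral>\<^sup>+ x. H_TII t \<gamma> tii x \<partial>M)"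
    using assms(6,8,9,11)
    by (intro nn_integral_add borel_measurable_H_WTP borel_measurable_H_TII) auto
  also have "\<dots> \<le> ennreal \<delta> + ennreal \<epsilon>"
    using assms(19,20) by (rule add_mono)
  also have "\<dots> = ennreal (\<delta> + \<epsilon>)"
    using assms(16,17) by simp
  also have "\<dots> \<le> ?B"
    using assms(2) by (intro ennreal_leI max.coboundedI1) simp
  finally have "(\<integral>\<^sup>+ x. neglog (dil_pred t tii wtp x (jbar x)) \<partial>M) \<le> ?B" .
  moreover have "(\<integral>\<^sup>+ x. H_TAP tap jbar x \<partial>M) \<le> ?B"
    using assms(21) by (rule order_trans) (intro ennreal_leI max.cobounded2)
  ultimately show ?thesis
    unfolding loss_error_def by (simp only: max.bounded_iff zero_le simp_thms)
qed

end
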